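(* Let $\alpha>0$, $\alpha\neq1$, and consider the system $$\dot u=\frac{uv}{u^2+v^2}-\alpha u,\qquad \dot v=\frac{v^2}{u^2+v^2}-\alpha v+\alpha-1 .$$ Then $$F=u^{\frac{\alpha}{1-\alpha}}\,v^{\frac{1}{\alpha-1}}\Big(\frac{u^2}{v^2}+1\Big)^{\frac{1}{2(\alpha-1)}}-\frac{\alpha\, v\ {}_2F_1\!\left(\frac12,\frac{\alpha}{2(\alpha-1)}+1;\frac32;\frac{v^2}{u^2+v^2}\right)}{(\alpha-1)\sqrt{u^2+v^2}}$$ is a first integral of this system.
   Context: ${}_2F_1(a,b;c;z)$ denotes the Gaussian hypergeometric function. The system is the special case $\alpha=\beta$ of Dixon's system $\dot u=\frac{uv}{u^2+v^2}-\alpha u$, $\dot v=\frac{v^2}{u^2+v^2}-\beta v+\beta-1$. *)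

theory Defs
  imports "HOL-Analysis.Analysis"
begin

text \<open>Gaussian hypergeometric function 2F1(a,b;c;z), defined by its power series
  (convergent for |z| < 1, which is the range used below).\<close>
definition hyp2F1 :: "real \<Rightarrow> real \<Rightarrow> real \<Rightarrow> real \<Rightarrow> real" where
  "hyp2F1 a b c z =
     (\<Sum>n. pochhammer a n * pochhammer b n / (pochhammer c n * fact n) * z ^ n)"

text \<open>The candidate first integral F of the system (case alpha = beta of Dixon's system).\<close>
definition dixonF :: "real \<Rightarrow> real \<Rightarrow> real \<Rightarrow> real" where
  "dixonF \<alpha> u v =
     u powr (\<alpha> / (1 - \<alpha>)) * v powr (1 / (\<alpha> - 1)) * (u\<^sup>2 / v\<^sup>2 + 1) powr (1 / (2 * (\<alpha> - 1)))
     - \<alpha> * v * hyp2F1 (1/2) (\<alpha> / (2 * (\<alpha> - 1)) + 1) (3/2) (v\<^sup>2 / (u\<^sup>2 + v\<^sup>2))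
       / ((\<alpha> - 1) * sqrt (u\<^sup>2 + v\<^sup>2))"

end

theory Submission
  imports Defs
begin

(* Write r = sqrt (u^2 + v^2) and s = v / r. For u, v > 0 the function F equals
   w - alpha / (alpha - 1) * H s, where w = r powr (1 / (alpha - 1)) * u powr (- alpha / (alpha - 1))
   and H s = s * 2F1(1/2, b; 3/2; s^2) with b = alpha / (2 (alpha - 1)) + 1.
   Along a solution (ln w)' = alpha and s' = (alpha - 1) u^2 / r^3. Differentiating the series
   termwise and summing with the binomial series gives H' s = (1 - s^2) powr (-b), and since
   1 - s^2 = u^2 / r^2 this makes H'(s) s' = (alpha - 1) w. Hence F' = alpha w - alpha w = 0. *)

lemma pochhammer_three_halves:
  "pochhammer (3/2 :: real) n = (2 * real n + 1) * pochhammer (1/2) n"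
  using pochhammer_rec[of "1/2 :: real" n] pochhammer_Suc[of "1/2 :: real" n]
  by (simp add: field_simps)

lemma hyp2F1_half_three_halves_coeff:
  "pochhammer (1/2) n * pochhammer b n / (pochhammer (3/2) n * fact n)
     = pochhammer b n / fact n / (2 * real n + 1 :: real)"
proof -
  have "pochhammer (1/2 :: real) n \<noteq> 0"
    by (simp add: pochhammer_eq_0_iff)
  then have "pochhammer (1/2) n * pochhammer b n / (pochhammer (1/2) n * (fact n * (2 * real n + 1)))
      = pochhammer b n / (fact n * (2 * real n + 1))"
    by (rule mult_divide_mult_cancel_left)
  then show ?thesis
    by (simp add: pochhammer_three_halves ac_simps)
qed

lemma pochhammer_binomial_sums:
  fixes z :: real
  assumes "\<bar>z\<bar> < 1"
  shows "(\<lambda>n. pochhammer b n / fact n * z ^ n) sums (1 - z) powr (-b)"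
proof -
  have "(\<lambda>n. ((-b) gchoose n) * (-z) ^ n) sums (1 + (-z)) powr (-b)"
    using assms by (intro gen_binomial_real) simp
  moreover have "((-b) gchoose n) * (-z) ^ n = pochhammer b n / fact n * z ^ n" for n
  proof -
    have "((-b) gchoose n) * (-z) ^ n = ((-1) ^ n * (-1) ^ n) * (pochhammer b n / fact n * z ^ n)"
      unfolding gbinomial_pochhammer power_minus[of z] by (simp add: mult_ac)
    then show ?thesis
      by (simp flip: power_mult_distrib)
  qed
  ultimately show ?thesis
    by simp
qed

lemma summable_hyp2F1_half_three_halves:
  fixes z :: real
  assumes "\<bar>z\<bar> < 1"
  shows "summable (\<lambda>n. pochhammer b n / fact n / (2 * real n + 1) * z ^ n)"
proof -
  have "ereal (norm z) < conv_radius (\<lambda>n. (-b) gchoose n)"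
    using assms by (simp add: conv_radius_gchoose)
  then have "summable (\<lambda>n. norm (((-b) gchoose n) * z ^ n))"
    by (rule abs_summable_in_conv_radius)
  moreover have "norm (pochhammer b n / fact n / (2 * real n + 1) * z ^ n)
      \<le> norm (((-b) gchoose n) * z ^ n)" for n
  proof -
    have "\<bar>pochhammer b n / fact n\<bar> / (2 * real n + 1) \<le> \<bar>pochhammer b n / fact n\<bar>"
      by (simp add: divide_le_eq mult_le_cancel_left1)
    then have "\<bar>pochhammer b n / fact n\<bar> / (2 * real n + 1) * \<bar>z ^ n\<bar>
        \<le> \<bar>pochhammer b n / fact n\<bar> * \<bar>z ^ n\<bar>"
      by (rule mult_right_mono) simp
    then show ?thesis
      by (simp add: gbinomial_pochhammer abs_mult)
  qed
  ultimately show ?thesis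
    by (rule summable_comparison_test'[where N = 0])
qed

lemma hyp2F1_half_three_halves_eq:
  "hyp2F1 (1/2) b (3/2) z = (\<Sum>n. pochhammer b n / fact n / (2 * real n + 1) * z ^ n)"
  by (simp add: hyp2F1_def hyp2F1_half_three_halves_coeff)

lemma hyp2F1_half_three_halves_ode:
  fixes z :: real
  assumes "\<bar>z\<bar> < 1"
  obtains D where "(hyp2F1 (1/2) b (3/2) has_real_derivative D) (at z)"
    and "hyp2F1 (1/2) b (3/2) z + 2 * z * D = (1 - z) powr (-b)"
proof -
  define c where "c n = pochhammer b n / fact n / (2 * real n + 1)" for n
  define D where "D = (\<Sum>n. diffs c n * z ^ n)"
  have F: "hyp2F1 (1/2) b (3/2) = (\<lambda>z. \<Sum>n. c n * z ^ n)"
    by (simp add: fun_eq_iff hyp2F1_half_three_halves_eq c_def)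
  have z: "norm z < 1"
    using assms by simp
  have summable: "summable (\<lambda>n. c n * w ^ n)" if "norm w < 1" for w
    using that summable_hyp2F1_half_three_halves by (simp add: c_def)
  have "(hyp2F1 (1/2) b (3/2) has_real_derivative D) (at z)"
    unfolding F D_def using summable z by (rule termdiffs_strong')
  moreover have "hyp2F1 (1/2) b (3/2) z + 2 * z * D = (1 - z) powr (-b)"
  proof -
    have "(\<lambda>n. of_nat n * c n * z ^ (n - 1)) sums D"
      unfolding D_def using diffs_equiv[OF termdiff_converges[OF z summable]] by simp
    then have "(\<lambda>n. of_nat n * c n * z ^ (n - 1) * z) sums (D * z)"
      by (rule sums_mult2)
    moreover have "(\<lambda>n. of_nat n * c n * z ^ (n - 1) * z) = (\<lambda>n. of_nat n * c n * z ^ n)"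
    proof
      fix n
      show "of_nat n * c n * z ^ (n - 1) * z = of_nat n * c n * z ^ n"
        by (cases n) simp_all
    qed
    ultimately have "(\<lambda>n. of_nat n * c n * z ^ n) sums (D * z)"
      by (simp only:)
    then have "(\<lambda>n. c n * z ^ n + 2 * (of_nat n * c n * z ^ n))
        sums (hyp2F1 (1/2) b (3/2) z + 2 * (D * z))"
      unfolding F using summable[OF z] by (intro sums_add sums_mult summable_sums)
    moreover have "c n * z ^ n + 2 * (of_nat n * c n * z ^ n) = pochhammer b n / fact n * z ^ n" for n
    proof -
      have coeff: "(2 * real n + 1) * c n = pochhammer b n / fact n"
        unfolding c_def by (simp add: add_pos_nonneg)
      show ?thesis
        by (simp add: algebra_simps flip: coeff)
    qed
    ultimately have "(\<lambda>n. pochhammer b n / fact n * z ^ n) sums (hyp2F1 (1/2) b (3/2) z + 2 * (D * z))"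
      by simp
    then show ?thesis
      using pochhammer_binomial_sums[OF assms, of b] by (simp add: sums_unique2 mult_ac)
  qed
  ultimately show ?thesis
    by (rule that)
qed

lemma has_real_derivative_hyp2F1_half_three_halves:
  fixes x :: real
  assumes "\<bar>x\<bar> < 1"
  shows "((\<lambda>x. x * hyp2F1 (1/2) b (3/2) (x\<^sup>2)) has_real_derivative (1 - x\<^sup>2) powr (-b)) (at x)"
proof -
  have "\<bar>x\<^sup>2\<bar> < 1"
    using assms by (simp add: abs_square_less_1)
  then obtain D where D: "(hyp2F1 (1/2) b (3/2) has_real_derivative D) (at (x\<^sup>2))"
    and ode: "hyp2F1 (1/2) b (3/2) (x\<^sup>2) + 2 * x\<^sup>2 * D = (1 - x\<^sup>2) powr (-b)"
    by (rule hyp2F1_half_three_halves_ode)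
  have "((\<lambda>x. x\<^sup>2) has_real_derivative 2 * x) (at x)"
    by (auto intro!: derivative_eq_intros)
  from DERIV_mult'[OF DERIV_ident DERIV_chain2[OF D this]]
  have "((\<lambda>x. x * hyp2F1 (1/2) b (3/2) (x\<^sup>2)) has_real_derivative
      x * (D * (2 * x)) + 1 * hyp2F1 (1/2) b (3/2) (x\<^sup>2)) (at x)" .
  moreover have "x * (D * (2 * x)) + 1 * hyp2F1 (1/2) b (3/2) (x\<^sup>2) = (1 - x\<^sup>2) powr (-b)"
    using ode by (simp add: power2_eq_square algebra_simps)
  ultimately show ?thesis
    by simp
qed

lemma dixonF_polar:
  fixes \<alpha> u v :: real
  assumes "u > 0" "v > 0" "\<alpha> \<noteq> 1"
  shows "dixonF \<alpha> u v =
    exp ((ln (sqrt (u\<^sup>2 + v\<^sup>2)) - \<alpha> * ln u) / (\<alpha> - 1))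
    - \<alpha> / (\<alpha> - 1) * (v / sqrt (u\<^sup>2 + v\<^sup>2) * hyp2F1 (1/2) (\<alpha> / (2 * (\<alpha> - 1)) + 1) (3/2)
        ((v / sqrt (u\<^sup>2 + v\<^sup>2))\<^sup>2))"
proof -
  define r where "r = sqrt (u\<^sup>2 + v\<^sup>2)"
  have r: "r > 0" "r\<^sup>2 = u\<^sup>2 + v\<^sup>2"
    using assms by (simp_all add: r_def add_pos_pos)
  have "u\<^sup>2 / v\<^sup>2 + 1 = (r / v)\<^sup>2"
    using assms r by (simp add: field_simps power_divide)
  then have "u powr (\<alpha> / (1 - \<alpha>)) * v powr (1 / (\<alpha> - 1)) * (u\<^sup>2 / v\<^sup>2 + 1) powr (1 / (2 * (\<alpha> - 1)))
      = exp (\<alpha> / (1 - \<alpha>) * ln u + 1 / (\<alpha> - 1) * ln v + 1 / (2 * (\<alpha> - 1)) * (2 * (ln r - ln v)))"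
    using assms r by (simp add: powr_def exp_add ln_realpow ln_div)
  also have "\<dots> = exp ((ln r - \<alpha> * ln u) / (\<alpha> - 1))"
  proof -
    define k where "k = 1 / (\<alpha> - 1)"
    have exponents: "\<alpha> / (1 - \<alpha>) = - \<alpha> * k" "1 / (2 * (\<alpha> - 1)) = k / 2"
      "(ln r - \<alpha> * ln u) / (\<alpha> - 1) = k * (ln r - \<alpha> * ln u)"
      using assms(3) by (simp_all add: k_def field_simps)
    show ?thesis
      unfolding exponents k_def[symmetric] by (simp add: algebra_simps)
  qed
  finally show ?thesis
    using r by (simp add: dixonF_def r_def[symmetric] power_divide)
qed

definition dixon_field_u :: "real \<Rightarrow> real \<Rightarrow> real \<Rightarrow> real" where
  "dixon_field_u \<alpha> u v = u * v / (u\<^sup>2 + v\<^sup>2) - \<alpha> * u"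

definition dixon_field_v :: "real \<Rightarrow> real \<Rightarrow> real \<Rightarrow> real" where
  "dixon_field_v \<alpha> u v = v\<^sup>2 / (u\<^sup>2 + v\<^sup>2) - \<alpha> * v + \<alpha> - 1"

lemma dixon_field_radial:
  assumes "u\<^sup>2 + v\<^sup>2 \<noteq> 0"
  shows "u * dixon_field_u \<alpha> u v + v * dixon_field_v \<alpha> u v = \<alpha> * (v - (u\<^sup>2 + v\<^sup>2))"
proof -
  define Q where "Q = u\<^sup>2 + v\<^sup>2"
  have "u * (u * v / Q - \<alpha> * u) + v * (v\<^sup>2 / Q - \<alpha> * v + \<alpha> - 1)
      = v * ((u\<^sup>2 + v\<^sup>2) / Q) - \<alpha> * (u\<^sup>2 + v\<^sup>2) + \<alpha> * v - v"
    by (simp add: algebra_simps power2_eq_square add_divide_distrib)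
  also have "\<dots> = \<alpha> * (v - Q)"
    using assms by (simp add: Q_def[symmetric] right_diff_distrib)
  finally show ?thesis
    unfolding dixon_field_u_def dixon_field_v_def Q_def .
qed

lemma dixon_field_angular:
  assumes "u\<^sup>2 + v\<^sup>2 \<noteq> 0"
  shows "dixon_field_v \<alpha> u v * (u\<^sup>2 + v\<^sup>2) - v * (u * dixon_field_u \<alpha> u v + v * dixon_field_v \<alpha> u v)
    = (\<alpha> - 1) * u\<^sup>2"
proof -
  define Q where "Q = u\<^sup>2 + v\<^sup>2"
  have "(v\<^sup>2 / Q - \<alpha> * v + \<alpha> - 1) * Q - v * (\<alpha> * (v - Q)) = (\<alpha> - 1) * u\<^sup>2"
    using assms by (simp add: Q_def field_simps power2_eq_square)
  then show ?thesis
    unfolding dixon_field_radial[OF assms] unfolding dixon_field_v_def Q_def .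
qed

lemma dixon_field_u_over_u:
  assumes "u \<noteq> 0"
  shows "dixon_field_u \<alpha> u v / u = v / (u\<^sup>2 + v\<^sup>2) - \<alpha>"
  using assms by (simp add: dixon_field_u_def diff_divide_distrib)

locale dixon_orbit =
  fixes \<alpha> :: real and T :: "real set" and u v :: "real \<Rightarrow> real"
  assumes alpha_ne_one: "\<alpha> \<noteq> 1"
    and u_pos: "t \<in> T \<Longrightarrow> u t > 0"
    and v_pos: "t \<in> T \<Longrightarrow> v t > 0"
    and u_deriv: "t \<in> T \<Longrightarrow> (u has_real_derivative dixon_field_u \<alpha> (u t) (v t)) (at t within T)"
    and v_deriv: "t \<in> T \<Longrightarrow> (v has_real_derivative dixon_field_v \<alpha> (u t) (v t)) (at t within T)"
begin

definition radius :: "real \<Rightarrow> real" where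
  "radius t = sqrt ((u t)\<^sup>2 + (v t)\<^sup>2)"

lemma radius_squared: "(radius t)\<^sup>2 = (u t)\<^sup>2 + (v t)\<^sup>2"
  by (simp add: radius_def)

lemma radius_pos:
  assumes "t \<in> T"
  shows "radius t > 0"
  using u_pos[OF assms] by (simp add: radius_def add_pos_nonneg)

lemma radius_deriv:
  assumes "t \<in> T"
  shows "(radius has_real_derivative \<alpha> * (v t - (radius t)\<^sup>2) / radius t) (at t within T)"
proof -
  have Q: "(u t)\<^sup>2 + (v t)\<^sup>2 > 0"
    using radius_pos[OF assms] by (simp flip: radius_squared)
  have "((\<lambda>t. (u t)\<^sup>2 + (v t)\<^sup>2) has_real_derivative
      2 * (u t * dixon_field_u \<alpha> (u t) (v t) + v t * dixon_field_v \<alpha> (u t) (v t))) (at t within T)"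
    using assms by (auto intro!: derivative_eq_intros u_deriv v_deriv simp: algebra_simps)
  from DERIV_chain2[OF DERIV_real_sqrt[OF Q] this]
  have "(radius has_real_derivative inverse (radius t) / 2 *
      (2 * (u t * dixon_field_u \<alpha> (u t) (v t) + v t * dixon_field_v \<alpha> (u t) (v t)))) (at t within T)"
    unfolding radius_def[abs_def] by simp
  moreover have "u t * dixon_field_u \<alpha> (u t) (v t) + v t * dixon_field_v \<alpha> (u t) (v t)
      = \<alpha> * (v t - (radius t)\<^sup>2)"
    using dixon_field_radial[OF Q[THEN less_imp_neq, symmetric]] by (simp add: radius_squared)
  moreover have "inverse (radius t) / 2 * (2 * X) = X / radius t" for X
    by (simp add: field_simps)
  ultimately show ?thesis
    by simp
qed

definition weight :: "real \<Rightarrow> real" where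
  "weight t = exp ((ln (radius t) - \<alpha> * ln (u t)) / (\<alpha> - 1))"

lemma weight_deriv:
  assumes "t \<in> T"
  shows "(weight has_real_derivative \<alpha> * weight t) (at t within T)"
proof -
  have r: "radius t > 0" and u: "u t > 0"
    using radius_pos u_pos assms by auto
  have "((\<lambda>t. (ln (radius t) - \<alpha> * ln (u t)) / (\<alpha> - 1)) has_real_derivative
      (1 / radius t * (\<alpha> * (v t - (radius t)\<^sup>2) / radius t)
        - \<alpha> * (1 / u t * dixon_field_u \<alpha> (u t) (v t))) / (\<alpha> - 1)) (at t within T)"
    using DERIV_chain2[OF DERIV_ln_divide[OF r] radius_deriv[OF assms]]
      DERIV_chain2[OF DERIV_ln_divide[OF u] u_deriv[OF assms]]
    by (intro DERIV_cdivide DERIV_diff DERIV_cmult)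
  moreover have "(1 / radius t * (\<alpha> * (v t - (radius t)\<^sup>2) / radius t)
      - \<alpha> * (1 / u t * dixon_field_u \<alpha> (u t) (v t))) / (\<alpha> - 1) = \<alpha>"
  proof -
    have radial: "1 / radius t * (\<alpha> * (v t - (radius t)\<^sup>2) / radius t) = \<alpha> * (v t / (radius t)\<^sup>2 - 1)"
      using r by (simp add: field_simps power2_eq_square)
    have logarithmic: "1 / u t * dixon_field_u \<alpha> (u t) (v t) = v t / (radius t)\<^sup>2 - \<alpha>"
      using dixon_field_u_over_u[of "u t" \<alpha> "v t"] u by (simp add: radius_squared)
    have "\<alpha> * (v t / (radius t)\<^sup>2 - 1) - \<alpha> * (v t / (radius t)\<^sup>2 - \<alpha>) = \<alpha> * (\<alpha> - 1)"
      by (simp add: algebra_simps)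
    then show ?thesis
      unfolding radial logarithmic using alpha_ne_one by simp
  qed
  ultimately have "((\<lambda>t. (ln (radius t) - \<alpha> * ln (u t)) / (\<alpha> - 1)) has_real_derivative \<alpha>)
      (at t within T)"
    by simp
  from DERIV_chain2[OF DERIV_exp this] show ?thesis
    unfolding weight_def[abs_def] by (simp add: mult.commute)
qed

definition sin_angle :: "real \<Rightarrow> real" where
  "sin_angle t = v t / radius t"

lemma one_minus_sin_angle_squared:
  assumes "t \<in> T"
  shows "1 - (sin_angle t)\<^sup>2 = (u t / radius t)\<^sup>2"
proof -
  have "(u t / radius t)\<^sup>2 + (sin_angle t)\<^sup>2 = ((u t)\<^sup>2 + (v t)\<^sup>2) / (radius t)\<^sup>2"
    by (simp add: sin_angle_def power_divide add_divide_distrib)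
  also have "\<dots> = 1"
    using radius_pos[OF assms] by (simp flip: radius_squared)
  finally show ?thesis
    by linarith
qed

lemma abs_sin_angle_less_1:
  assumes "t \<in> T"
  shows "\<bar>sin_angle t\<bar> < 1"
proof -
  have "(u t / radius t)\<^sup>2 > 0"
    using u_pos[OF assms] radius_pos[OF assms] by simp
  then have "(sin_angle t)\<^sup>2 < 1"
    using one_minus_sin_angle_squared[OF assms] by linarith
  then show ?thesis
    by (simp add: abs_square_less_1)
qed

lemma sin_angle_deriv:
  assumes "t \<in> T"
  shows "(sin_angle has_real_derivative (\<alpha> - 1) * (u t)\<^sup>2 / (radius t)^3) (at t within T)"
proof -
  have r: "radius t > 0"
    using radius_pos[OF assms] .
  have Q: "(u t)\<^sup>2 + (v t)\<^sup>2 \<noteq> 0"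
    using r by (simp flip: radius_squared)
  have "(sin_angle has_real_derivative
      (dixon_field_v \<alpha> (u t) (v t) * radius t - v t * (\<alpha> * (v t - (radius t)\<^sup>2) / radius t))
        / (radius t * radius t)) (at t within T)"
    unfolding sin_angle_def[abs_def] using r
    by (intro DERIV_divide v_deriv radius_deriv assms) simp
  moreover have "(dixon_field_v \<alpha> (u t) (v t) * radius t - v t * (\<alpha> * (v t - (radius t)\<^sup>2) / radius t))
        / (radius t * radius t)
      = (dixon_field_v \<alpha> (u t) (v t) * (radius t)\<^sup>2 - v t * (\<alpha> * (v t - (radius t)\<^sup>2))) / (radius t)^3"
    using r by (simp add: field_simps power2_eq_square power3_eq_cube)
  moreover have "dixon_field_v \<alpha> (u t) (v t) * (radius t)\<^sup>2 - v t * (\<alpha> * (v t - (radius t)\<^sup>2))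
      = (\<alpha> - 1) * (u t)\<^sup>2"
    using dixon_field_angular[OF Q] unfolding dixon_field_radial[OF Q] radius_squared .
  ultimately show ?thesis
    by simp
qed

lemma weight_eq_hyp2F1_factor:
  assumes "t \<in> T"
  shows "(1 - (sin_angle t)\<^sup>2) powr (-(\<alpha> / (2 * (\<alpha> - 1)) + 1)) * ((u t)\<^sup>2 / (radius t)^3)
    = weight t"
proof -
  define b where "b = \<alpha> / (2 * (\<alpha> - 1)) + 1"
  have r: "radius t > 0" and u: "u t > 0"
    using radius_pos u_pos assms by auto
  have "ln ((1 - (sin_angle t)\<^sup>2) powr (-b) * ((u t)\<^sup>2 / (radius t)^3))
      = -b * (2 * (ln (u t) - ln (radius t))) + (2 * ln (u t) - 3 * ln (radius t))"
    using r u by (simp add: one_minus_sin_angle_squared[OF assms] ln_mult ln_div ln_powr ln_realpow)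
  also have "\<dots> = (ln (radius t) - \<alpha> * ln (u t)) / (\<alpha> - 1)"
  proof -
    have "\<alpha> - 1 \<noteq> 0"
      using alpha_ne_one by simp
    then show ?thesis
      by (simp add: b_def field_simps)
  qed
  also have "\<dots> = ln (weight t)"
    by (simp add: weight_def)
  finally have "ln ((1 - (sin_angle t)\<^sup>2) powr (-b) * ((u t)\<^sup>2 / (radius t)^3)) = ln (weight t)" .
  moreover have "(1 - (sin_angle t)\<^sup>2) powr (-b) * ((u t)\<^sup>2 / (radius t)^3) > 0"
    using r u by (simp add: one_minus_sin_angle_squared[OF assms])
  moreover have "weight t > 0"
    by (simp add: weight_def)
  ultimately show ?thesis
    by (simp add: b_def)
qed

lemma dixonF_on_orbit:
  assumes "t \<in> T"
  shows "dixonF \<alpha> (u t) (v t) = weight t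
    - \<alpha> / (\<alpha> - 1) * (sin_angle t * hyp2F1 (1/2) (\<alpha> / (2 * (\<alpha> - 1)) + 1) (3/2) ((sin_angle t)\<^sup>2))"
  using dixonF_polar[OF u_pos[OF assms] v_pos[OF assms] alpha_ne_one]
  by (simp add: weight_def sin_angle_def radius_def)

lemma dixonF_on_orbit_deriv:
  assumes "t \<in> T"
  shows "((\<lambda>t. dixonF \<alpha> (u t) (v t)) has_real_derivative 0) (at t within T)"
proof -
  define b where "b = \<alpha> / (2 * (\<alpha> - 1)) + 1"
  define H where "H x = x * hyp2F1 (1/2) b (3/2) (x\<^sup>2)" for x
  have "((\<lambda>t. H (sin_angle t)) has_real_derivative
      (1 - (sin_angle t)\<^sup>2) powr (-b) * ((\<alpha> - 1) * (u t)\<^sup>2 / (radius t)^3)) (at t within T)"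
    using DERIV_chain2[OF has_real_derivative_hyp2F1_half_three_halves[OF abs_sin_angle_less_1[OF assms]]
        sin_angle_deriv[OF assms]]
    unfolding H_def .
  then have "((\<lambda>t. weight t - \<alpha> / (\<alpha> - 1) * H (sin_angle t)) has_real_derivative
      \<alpha> * weight t - \<alpha> / (\<alpha> - 1) * ((1 - (sin_angle t)\<^sup>2) powr (-b) * ((\<alpha> - 1) * (u t)\<^sup>2 / (radius t)^3)))
      (at t within T)"
    by (intro DERIV_diff DERIV_cmult weight_deriv assms)
  moreover have "(1 - (sin_angle t)\<^sup>2) powr (-b) * ((\<alpha> - 1) * (u t)\<^sup>2 / (radius t)^3)
      = (\<alpha> - 1) * ((1 - (sin_angle t)\<^sup>2) powr (-b) * ((u t)\<^sup>2 / (radius t)^3))"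
    by (simp add: algebra_simps)
  ultimately have "((\<lambda>t. weight t - \<alpha> / (\<alpha> - 1) * H (sin_angle t)) has_real_derivative
      \<alpha> * weight t - \<alpha> / (\<alpha> - 1) * ((\<alpha> - 1) * weight t)) (at t within T)"
    using weight_eq_hyp2F1_factor[OF assms] by (simp only: b_def)
  then have "((\<lambda>t. weight t - \<alpha> / (\<alpha> - 1) * H (sin_angle t)) has_real_derivative 0) (at t within T)"
    using alpha_ne_one by simp
  then show ?thesis
    by (rule has_field_derivative_transform_within[where d = 1]) (simp_all add: assms dixonF_on_orbit H_def b_def)
qed

lemma dixonF_on_orbit_constant:
  assumes "is_interval T" "s \<in> T" "t \<in> T"
  shows "dixonF \<alpha> (u s) (v s) = dixonF \<alpha> (u t) (v t)"
  using has_field_derivative_zero_constant[OF is_interval_convex[OF assms(1)] dixonF_on_orbit_deriv]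
    assms(2,3) by metis

end

theorem mainTheorem3:
  fixes \<alpha> :: real and T :: "real set" and u v :: "real \<Rightarrow> real"
  assumes "\<alpha> > 0" and "\<alpha> \<noteq> 1"
    and "is_interval T"
    and "\<forall>t\<in>T. u t > 0 \<and> v t > 0"
    and "\<forall>t\<in>T. (u has_real_derivative
            (u t * v t / ((u t)\<^sup>2 + (v t)\<^sup>2) - \<alpha> * u t)) (at t within T)"
    and "\<forall>t\<in>T. (v has_real_derivative
            ((v t)\<^sup>2 / ((u t)\<^sup>2 + (v t)\<^sup>2) - \<alpha> * v t + \<alpha> - 1)) (at t within T)"
  shows "\<forall>s\<in>T. \<forall>t\<in>T. dixonF \<alpha> (u s) (v s) = dixonF \<alpha> (u t) (v t)"
proof -
  interpret dixon_orbit \<alpha> T u v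
    using assms(2,4-6) by unfold_locales (simp_all add: dixon_field_u_def dixon_field_v_def)
  show ?thesis
    using dixonF_on_orbit_constant assms(3) by blast
qed

end
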